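(* For every $y_0\in Y$, $\Gamma_{per}(y_0)\subset W_1(y_0)$ and $V_{per}(y_0)\ge k^*(y_0)$.
   Context: Let $Y\subset\mathbb{R}^m$ be nonempty compact, $U_0$ a compact metric space, $U(\cdot):Y\rightsquigarrow U_0$ upper semicontinuous and compact-valued, and $f:\mathbb{R}^m\times U_0\to\mathbb{R}^m$, $k:\mathbb{R}^m\times U_0\to\mathbb{R}$ continuous. Put $A(y):=\{u\in U(y): f(y,u)\in Y\}$ and $G:=\{(y,u):y\in Y,\ u\in A(y)\}$. Standing assumption: $A(y)\ne\emptyset$ for all $y$. An admissible process from $z\in Y$ on a time range is a pair $(y(t),u(t))$ with $y(0)=z$, $u(t)\in A(y(t))$ and $y(t+1)=f(y(t),u(t))$. Let $\mathcal U_{\bar t}(y_0)$ denote the admissible controls from $y_0$ on $\{0,\dots,\bar t-1\}$. Periodic processes: - For an integer $\mathcal T>0$, a $\mathcal T$-periodic admissible process $(y_{\mathcal T}(\cdot),u_{\mathcal T}(\cdot))$ is an admissible process on $\{0,1,\dots\}$ (from $y_{\mathcal T}(0)$) satisfying $(y_{\mathcal T}(t+\mathcal T),u_{\mathcal T}(t+\mathcal T))=(y_{\mathcal T}(t),u_{\mathcal T}(t))$ for all $t$. - Such a process is finite-time reachable from $y_0$ if there exist an integer $\bar t\ge0$ and a control $u\in\mathcal U_{\bar t}(y_0)$ whose trajectory satisfies $y(\bar t)=y_{\mathcal T}(0)$. - $\Gamma_{per}(y_0)$ is the set of Borel probability measures $\gamma$ on $G$ of the form $\gamma(Q)=\frac1{\mathcal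 T}\sum_{t=0}^{\mathcal T-1}1_Q(y_{\mathcal T}(t),u_{\mathcal T}(t))$ generated by such finite-time-reachable periodic processes. - $V_{per}(y_0):=\inf\frac1{\mathcal T}\sum_{t=0}^{\mathcal T-1}k(y_{\mathcal T}(t),u_{\mathcal T}(t))$, where the infimum is over all $\mathcal T$ and all such processes. Measure spaces and LP objects: - $\mathcal P(G)$ denotes the Borel probability measures on $G$ and $\mathcal M_+(G)$ the finite nonnegative Borel measures on $G$. - $W:=\{\gamma\in\mathcal P(G):\int_G(\varphi(f(y,u))-\varphi(y))\,d\gamma=0\ \forall\varphi\in C(Y)\}$. - $W_1(y_0)$ is the set of $\gamma\in W$ for which there exists $\xi\in\mathcal M_+(G)$ with $\int_G(\varphi(y)-\varphi(y_0))\,d\gamma=\int_G(\varphi(f(y,u))-\varphi(y))\,d\xi$ for all $\varphi\in C(Y)$. - $k^*(y_0):=\inf_{\gamma\in W_1(y_0)}\int_Gk\,d\gamma$. Equivalently, $k^*(y_0)$ is the infimum of $\int_G k\,d\gamma$ over pairs $(\gamma,\xi)\in\mathcal P(G)\times\mathcal M_+(G)$ with $\gamma\in W$ and $\int_G(\varphi(y_0)-\varphi(y))\,d\gamma+\int_G(\varphi(f(y,u))-\varphi(y))\,d\xi=0$ for all $\varphi\in C(Y)$. *)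

theory Defs
  imports "HOL-Analysis.Analysis" "HOL-Probability.Probability"
begin

definition usc_on :: "'a::topological_space set \<Rightarrow> ('a \<Rightarrow> 'b::topological_space set) \<Rightarrow> bool" where
  "usc_on Y U \<longleftrightarrow> (\<forall>y\<in>Y. \<forall>V. open V \<and> U y \<subseteq> V \<longrightarrow>
      (\<exists>N. open N \<and> y \<in> N \<and> (\<forall>y'\<in>Y \<inter> N. U y' \<subseteq> V)))"

definition adm :: "'a set \<Rightarrow> ('a \<Rightarrow> 'u set) \<Rightarrow> ('a \<Rightarrow> 'u \<Rightarrow> 'a) \<Rightarrow> 'a \<Rightarrow> 'u set" where
  "adm Y U f y = {u \<in> U y. f y u \<in> Y}"

definition graphG :: "'a set \<Rightarrow> ('a \<Rightarrow> 'u set) \<Rightarrow> ('a \<Rightarrow> 'u \<Rightarrow> 'a) \<Rightarrow> ('a \<times> 'u) set" where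
  "graphG Y U f = {(y, u). y \<in> Y \<and> u \<in> adm Y U f y}"

definition prob_on :: "'b::topological_space set \<Rightarrow> 'b measure \<Rightarrow> bool" where
  "prob_on S M \<longleftrightarrow> prob_space M \<and> sets M = sets (restrict_space borel S)"

definition finmeas_on :: "'b::topological_space set \<Rightarrow> 'b measure \<Rightarrow> bool" where
  "finmeas_on S M \<longleftrightarrow> finite_measure M \<and> sets M = sets (restrict_space borel S)"

definition Wset :: "'a::topological_space set \<Rightarrow> ('a \<Rightarrow> 'u::topological_space set) \<Rightarrow> ('a \<Rightarrow> 'u \<Rightarrow> 'a)
    \<Rightarrow> ('a \<times> 'u) measure set" where
  "Wset Y U f = {\<gamma>. prob_on (graphG Y U f) \<gamma> \<and>
     (\<forall>\<phi> :: 'a \<Rightarrow> real. continuous_on Y \<phi> \<longrightarrow>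
        (\<integral>p. \<phi> (f (fst p) (snd p)) - \<phi> (fst p) \<partial>\<gamma>) = 0)}"

definition W1set :: "'a::topological_space set \<Rightarrow> ('a \<Rightarrow> 'u::topological_space set) \<Rightarrow> ('a \<Rightarrow> 'u \<Rightarrow> 'a)
    \<Rightarrow> 'a \<Rightarrow> ('a \<times> 'u) measure set" where
  "W1set Y U f y0 = {\<gamma> \<in> Wset Y U f. \<exists>\<xi>. finmeas_on (graphG Y U f) \<xi> \<and>
     (\<forall>\<phi> :: 'a \<Rightarrow> real. continuous_on Y \<phi> \<longrightarrow>
        (\<integral>p. \<phi> (fst p) - \<phi> y0 \<partial>\<gamma>) = (\<integral>p. \<phi> (f (fst p) (snd p)) - \<phi> (fst p) \<partial>\<xi>))}"

text \<open>k*(y0) = inf over W_1(y0) of the integral of k (as an extended real; inf of the empty set is +infinity).\<close>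
definition kstar :: "'a::topological_space set \<Rightarrow> ('a \<Rightarrow> 'u::topological_space set) \<Rightarrow> ('a \<Rightarrow> 'u \<Rightarrow> 'a)
    \<Rightarrow> ('a \<Rightarrow> 'u \<Rightarrow> real) \<Rightarrow> 'a \<Rightarrow> ereal" where
  "kstar Y U f k y0 = (INF \<gamma>\<in>W1set Y U f y0. ereal (\<integral>p. k (fst p) (snd p) \<partial>\<gamma>))"

definition periodic_reachable :: "'a set \<Rightarrow> ('a \<Rightarrow> 'u set) \<Rightarrow> ('a \<Rightarrow> 'u \<Rightarrow> 'a) \<Rightarrow> 'a
    \<Rightarrow> nat \<Rightarrow> (nat \<Rightarrow> 'a) \<Rightarrow> (nat \<Rightarrow> 'u) \<Rightarrow> bool" where
  "periodic_reachable Y U f y0 T yT uT \<longleftrightarrow>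
     T > 0 \<and>
     (\<forall>t. yT t \<in> Y \<and> uT t \<in> adm Y U f (yT t) \<and> yT (Suc t) = f (yT t) (uT t)) \<and>
     (\<forall>t. yT (t + T) = yT t \<and> uT (t + T) = uT t) \<and>
     (\<exists>tb (yr :: nat \<Rightarrow> 'a) (ur :: nat \<Rightarrow> 'u). yr 0 = y0 \<and>
        (\<forall>t<tb. yr t \<in> Y \<and> ur t \<in> adm Y U f (yr t) \<and> yr (Suc t) = f (yr t) (ur t)) \<and>
        yr tb = yT 0)"

definition Gamma_per :: "'a::topological_space set \<Rightarrow> ('a \<Rightarrow> 'u::topological_space set) \<Rightarrow> ('a \<Rightarrow> 'u \<Rightarrow> 'a)
    \<Rightarrow> 'a \<Rightarrow> ('a \<times> 'u) measure set" where
  "Gamma_per Y U f y0 = {\<gamma>. prob_on (graphG Y U f) \<gamma> \<and>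
     (\<exists>T yT uT. periodic_reachable Y U f y0 T yT uT \<and>
        (\<forall>Q\<in>sets \<gamma>. emeasure \<gamma> Q =
            ennreal ((1 / real T) * (\<Sum>t<T. indicator Q (yT t, uT t)))))}"

text \<open>V_per(y0) (extended real; inf of the empty set is +infinity).\<close>
definition V_per :: "'a set \<Rightarrow> ('a \<Rightarrow> 'u set) \<Rightarrow> ('a \<Rightarrow> 'u \<Rightarrow> 'a)
    \<Rightarrow> ('a \<Rightarrow> 'u \<Rightarrow> real) \<Rightarrow> 'a \<Rightarrow> ereal" where
  "V_per Y U f k y0 = (INF (T, yT, uT)\<in>{(T, yT, uT). periodic_reachable Y U f y0 T yT uT}.
       ereal ((1 / real T) * (\<Sum>t<T. k (yT t) (uT t))))"

end

theory Submission imports Defs begin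

(* The measure generated by a T-periodic process is the occupation measure of one period, i.e.
   the average of the Dirac masses at (yT t, uT t), t < T.  Integrating phi(f(y,u)) - phi(y)
   against it telescopes over the period to 0, so it lies in W.  If a path w from y0 enters the
   period at time tb, the occupation measure xi of the path segments of lengths tb + t, t < T,
   weighted by 1/T, satisfies the W1 identity, because along each segment the increments of phi
   telescope to phi(yT t) - phi(y0).  Finally the integral of k against the periodic measure is
   the average cost over the period, whence k* <= V_per. *)

definition occupation_measure :: "'i set \<Rightarrow> real \<Rightarrow> ('i \<Rightarrow> 'b::topological_space) \<Rightarrow> 'b set \<Rightarrow> 'b measure"
  where "occupation_measure I c p S = distr (point_measure I (\<lambda>_. ennreal c)) (restrict_space borel S) p"

lemma sets_occupation_measure [simp]:
  "sets (occupation_measure I c p S) = sets (restrict_space borel S)"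
  by (simp add: occupation_measure_def)

lemma measurable_occupation_path:
  "p ` I \<subseteq> S \<Longrightarrow> p \<in> point_measure I w \<rightarrow>\<^sub>M restrict_space borel S"
  by (auto simp: space_restrict_space)

lemma integral_occupation_measure:
  assumes "finite I" "c \<ge> 0" "p ` I \<subseteq> S" "g \<in> borel_measurable (restrict_space borel S)"
  shows "integral\<^sup>L (occupation_measure I c p S) g = c * (\<Sum>i\<in>I. g (p i))"
proof -
  have "integral\<^sup>L (occupation_measure I c p S) g = integral\<^sup>L (point_measure I (\<lambda>_. c)) (g \<circ> p)"
    unfolding occupation_measure_def comp_def
    using assms(3,4) by (intro integral_distr measurable_occupation_path)
  also have "\<dots> = c * (\<Sum>i\<in>I. g (p i))"
    using assms(1,2) by (simp add: lebesgue_integral_point_measure_finite sum_distrib_left)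
  finally show ?thesis .
qed

lemma emeasure_occupation_measure:
  assumes "finite I" "c \<ge> 0" "p ` I \<subseteq> S" "Q \<in> sets (restrict_space borel S)"
  shows "emeasure (occupation_measure I c p S) Q = ennreal (c * (\<Sum>i\<in>I. indicator Q (p i)))"
proof -
  have "emeasure (occupation_measure I c p S) Q = (\<Sum>i\<in>p -` Q \<inter> I. ennreal c)"
    unfolding occupation_measure_def using assms(1)
    by (simp add: emeasure_distr[OF measurable_occupation_path[OF assms(3)] assms(4)]
        space_point_measure emeasure_point_measure_finite del: sum_constant)
  also have "\<dots> = (\<Sum>i\<in>I. ennreal (c * indicator Q (p i)))"
    using assms(1) by (intro sum.mono_neutral_cong_left) (auto simp: indicator_def)
  also have "\<dots> = ennreal (c * (\<Sum>i\<in>I. indicator Q (p i)))"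
    using assms(2) by (simp add: sum_distrib_left)
  finally show ?thesis .
qed

lemma finite_measure_occupation_measure:
  assumes "finite I" "c \<ge> 0" "p ` I \<subseteq> S"
  shows "finite_measure (occupation_measure I c p S)"
proof (rule finite_measureI)
  have "space (occupation_measure I c p S) \<in> sets (restrict_space borel S)"
    by (metis sets.top sets_occupation_measure)
  then show "emeasure (occupation_measure I c p S) (space (occupation_measure I c p S)) \<noteq> \<infinity>"
    using assms by (simp add: emeasure_occupation_measure)
qed

lemma prob_space_occupation_measure:
  assumes "finite I" "I \<noteq> {}" "p ` I \<subseteq> S"
  shows "prob_space (occupation_measure I (1 / card I) p S)" (is "prob_space ?M")
proof (rule prob_spaceI)
  have "space ?M = S"
    by (simp add: occupation_measure_def space_restrict_space)
  moreover have "S \<in> sets (restrict_space borel S)"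
    using sets.top[of "restrict_space borel S"] by (simp add: space_restrict_space)
  ultimately show "emeasure ?M (space ?M) = 1"
    using assms by (simp add: emeasure_occupation_measure indicator_def subset_eq)
qed

lemma occupation_measure_eqI:
  assumes "finite I" "c \<ge> 0" "p ` I \<subseteq> S" "sets M = sets (restrict_space borel S)"
    and "\<And>Q. Q \<in> sets M \<Longrightarrow> emeasure M Q = ennreal (c * (\<Sum>i\<in>I. indicator Q (p i)))"
  shows "M = occupation_measure I c p S"
  using assms by (intro measure_eqI) (simp_all add: emeasure_occupation_measure)

lemma sum_Sigma_lessThan_telescope:
  fixes g :: "nat \<Rightarrow> 'b::ab_group_add"
  assumes "finite A"
  shows "(\<Sum>(t, j)\<in>(SIGMA t:A. {..<n t}). g (Suc j) - g j) = (\<Sum>t\<in>A. g (n t) - g 0)"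
proof -
  have "(\<Sum>(t, j)\<in>(SIGMA t:A. {..<n t}). g (Suc j) - g j) = (\<Sum>t\<in>A. \<Sum>j<n t. g (Suc j) - g j)"
    using assms by (rule sum.Sigma[symmetric]) auto
  then show ?thesis
    by (simp add: sum_lessThan_telescope)
qed

lemma continuous_on_graphG:
  assumes "\<forall>y\<in>Y. U y \<subseteq> U0" and "continuous_on (UNIV \<times> U0) (\<lambda>(y, u). h y u)"
  shows "continuous_on (graphG Y U f) (\<lambda>p. h (fst p) (snd p))"
proof -
  have "graphG Y U f \<subseteq> UNIV \<times> U0"
    using assms(1) by (auto simp: graphG_def adm_def)
  then show ?thesis
    using continuous_on_subset[OF assms(2)] by (simp add: case_prod_beta)
qed

lemma borel_measurable_increment_graphG:
  fixes \<phi> :: "'a::topological_space \<Rightarrow> real"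
  assumes "continuous_on (graphG Y U f) (\<lambda>p. f (fst p) (snd p))" and "continuous_on Y \<phi>"
  shows "(\<lambda>p. \<phi> (f (fst p) (snd p)) - \<phi> (fst p)) \<in> borel_measurable (restrict_space borel (graphG Y U f))"
proof (rule borel_measurable_continuous_on_restrict)
  have "continuous_on (graphG Y U f) (\<lambda>p. \<phi> (f (fst p) (snd p)))"
    by (rule continuous_on_compose2[OF assms(2,1)]) (auto simp: graphG_def adm_def)
  moreover have "continuous_on (graphG Y U f) (\<lambda>p. \<phi> (fst p))"
    by (rule continuous_on_compose2[OF assms(2) continuous_on_fst[OF continuous_on_id]])
      (auto simp: graphG_def)
  ultimately show "continuous_on (graphG Y U f) (\<lambda>p. \<phi> (f (fst p) (snd p)) - \<phi> (fst p))"
    by (intro continuous_intros)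
qed

lemma borel_measurable_state_graphG:
  fixes \<phi> :: "'a::topological_space \<Rightarrow> real"
  assumes "continuous_on Y \<phi>"
  shows "(\<lambda>p. \<phi> (fst p) - c) \<in> borel_measurable (restrict_space borel (graphG Y U f))"
proof (rule borel_measurable_continuous_on_restrict)
  have "continuous_on (graphG Y U f) (\<lambda>p. \<phi> (fst p))"
    by (rule continuous_on_compose2[OF assms continuous_on_fst[OF continuous_on_id]])
      (auto simp: graphG_def)
  then show "continuous_on (graphG Y U f) (\<lambda>p. \<phi> (fst p) - c)"
    by (intro continuous_intros)
qed

definition period_occupation ::
    "'a::topological_space set \<Rightarrow> ('a \<Rightarrow> 'u::topological_space set) \<Rightarrow> ('a \<Rightarrow> 'u \<Rightarrow> 'a)
      \<Rightarrow> nat \<Rightarrow> (nat \<Rightarrow> 'a) \<Rightarrow> (nat \<Rightarrow> 'u) \<Rightarrow> ('a \<times> 'u) measure"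
  where "period_occupation Y U f T yT uT =
    occupation_measure {..<T} (1 / real T) (\<lambda>t. (yT t, uT t)) (graphG Y U f)"

lemma integral_period_occupation:
  assumes "\<forall>t<T. (yT t, uT t) \<in> graphG Y U f"
    and "g \<in> borel_measurable (restrict_space borel (graphG Y U f))"
  shows "integral\<^sup>L (period_occupation Y U f T yT uT) g = (1 / real T) * (\<Sum>t<T. g (yT t, uT t))"
  unfolding period_occupation_def using assms
  by (subst integral_occupation_measure) auto

lemma period_occupation_in_Wset:
  assumes f_cont: "continuous_on (graphG Y U f) (\<lambda>p. f (fst p) (snd p))"
    and "T > 0"
    and loop: "\<forall>t<T. (yT t, uT t) \<in> graphG Y U f \<and> yT (Suc t) = f (yT t) (uT t)"
    and closed: "yT T = yT 0"
  shows "period_occupation Y U f T yT uT \<in> Wset Y U f"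
proof -
  have "prob_space (period_occupation Y U f T yT uT)"
    unfolding period_occupation_def
    using prob_space_occupation_measure[of "{..<T}" "\<lambda>t. (yT t, uT t)" "graphG Y U f"] \<open>T > 0\<close> loop
    by auto
  moreover have "(\<integral>p. \<phi> (f (fst p) (snd p)) - \<phi> (fst p) \<partial>period_occupation Y U f T yT uT) = 0"
    if "continuous_on Y \<phi>" for \<phi> :: "'a \<Rightarrow> real"
  proof -
    have "(\<Sum>t<T. \<phi> (f (yT t) (uT t)) - \<phi> (yT t)) = (\<Sum>t<T. \<phi> (yT (Suc t)) - \<phi> (yT t))"
      using loop by simp
    also have "\<dots> = 0"
      using closed by (simp add: sum_lessThan_telescope[of "\<lambda>t. \<phi> (yT t)"])
    finally show ?thesis
      using loop by (simp add: integral_period_occupation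
          borel_measurable_increment_graphG[OF f_cont that])
  qed
  ultimately show ?thesis
    by (simp add: Wset_def prob_on_def period_occupation_def)
qed

lemma periodic_reachable_in_graphG:
  "periodic_reachable Y U f y0 T yT uT \<Longrightarrow> (yT t, uT t) \<in> graphG Y U f"
  by (simp add: periodic_reachable_def graphG_def)

lemma periodic_reachable_obtain_path:
  assumes "periodic_reachable Y U f y0 T yT uT"
  obtains tb w v where "w 0 = y0" and "\<And>j. (w j, v j) \<in> graphG Y U f"
    and "\<And>j. w (Suc j) = f (w j) (v j)" and "\<And>t. w (tb + t) = yT t"
proof -
  obtain tb yr ur where "yr 0 = y0" and "yr tb = yT 0"
    and reach: "\<And>t. t < tb \<Longrightarrow> yr t \<in> Y \<and> ur t \<in> adm Y U f (yr t) \<and> yr (Suc t) = f (yr t) (ur t)"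
    using assms unfolding periodic_reachable_def by blast
  have per: "\<And>t. yT t \<in> Y \<and> uT t \<in> adm Y U f (yT t) \<and> yT (Suc t) = f (yT t) (uT t)"
    using assms unfolding periodic_reachable_def by blast
  define w where "w j = (if j < tb then yr j else yT (j - tb))" for j
  define v where "v j = (if j < tb then ur j else uT (j - tb))" for j
  show thesis
  proof
    show "w 0 = y0"
      using \<open>yr 0 = y0\<close> \<open>yr tb = yT 0\<close> by (cases "tb = 0") (simp_all add: w_def)
    show "(w j, v j) \<in> graphG Y U f" for j
      using reach[of j] per[of "j - tb"] by (simp add: w_def v_def graphG_def)
    show "w (Suc j) = f (w j) (v j)" for j
    proof -
      consider "Suc j < tb" | "Suc j = tb" | "tb \<le> j" by linarith
      then show ?thesis
      proof cases
        case 3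
        then have "Suc j - tb = Suc (j - tb)" by simp
        then show ?thesis using 3 per[of "j - tb"] by (simp add: w_def v_def)
      qed (use reach[of j] \<open>yr tb = yT 0\<close> in \<open>simp_all add: w_def v_def\<close>)
    qed
    show "w (tb + t) = yT t" for t
      by (simp add: w_def)
  qed
qed

lemma periodic_reachable_closed_loop:
  assumes "periodic_reachable Y U f y0 T yT uT"
  shows "T > 0" and "\<forall>t<T. (yT t, uT t) \<in> graphG Y U f \<and> yT (Suc t) = f (yT t) (uT t)"
    and "yT T = yT 0"
  using assms periodic_reachable_in_graphG[OF assms] unfolding periodic_reachable_def
  by (metis add_0)+

lemma period_occupation_in_W1set:
  assumes f_cont: "continuous_on (graphG Y U f) (\<lambda>p. f (fst p) (snd p))"
    and P: "periodic_reachable Y U f y0 T yT uT"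
  shows "period_occupation Y U f T yT uT \<in> W1set Y U f y0"
proof -
  obtain tb w v where "w 0 = y0" and path_G: "\<And>j. (w j, v j) \<in> graphG Y U f"
    and path_step: "\<And>j. w (Suc j) = f (w j) (v j)" and enter: "\<And>t. w (tb + t) = yT t"
    using periodic_reachable_obtain_path[OF P] by blast
  have W: "period_occupation Y U f T yT uT \<in> Wset Y U f"
    using periodic_reachable_closed_loop[OF P] by (intro period_occupation_in_Wset[OF f_cont])
  define J where "J = (SIGMA t:{..<T}. {..<tb + t})"
  define \<xi> where "\<xi> = occupation_measure J (1 / real T) (\<lambda>(t, j). (w j, v j)) (graphG Y U f)"
  have J: "finite J" "(\<lambda>(t, j). (w j, v j)) ` J \<subseteq> graphG Y U f"
    using path_G by (auto simp: J_def)
  have "finmeas_on (graphG Y U f) \<xi>"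
    unfolding finmeas_on_def \<xi>_def using J by (simp add: finite_measure_occupation_measure)
  moreover have "(\<integral>p. \<phi> (fst p) - \<phi> y0 \<partial>period_occupation Y U f T yT uT)
      = (\<integral>p. \<phi> (f (fst p) (snd p)) - \<phi> (fst p) \<partial>\<xi>)"
    if "continuous_on Y \<phi>" for \<phi> :: "'a \<Rightarrow> real"
  proof -
    have "(\<integral>p. \<phi> (f (fst p) (snd p)) - \<phi> (fst p) \<partial>\<xi>)
        = (1 / real T) * (\<Sum>(t, j)\<in>J. \<phi> (w (Suc j)) - \<phi> (w j))"
      unfolding \<xi>_def using J path_step
      by (simp add: integral_occupation_measure borel_measurable_increment_graphG[OF f_cont that]
          case_prod_beta)
    also have "(\<Sum>(t, j)\<in>J. \<phi> (w (Suc j)) - \<phi> (w j)) = (\<Sum>t<T. \<phi> (yT t) - \<phi> y0)"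
      unfolding J_def using \<open>w 0 = y0\<close> enter
      by (simp add: sum_Sigma_lessThan_telescope[where g = "\<lambda>j. \<phi> (w j)" and n = "\<lambda>t. tb + t"])
    finally show ?thesis
      using periodic_reachable_in_graphG[OF P]
      by (simp add: integral_period_occupation borel_measurable_state_graphG[OF that])
  qed
  ultimately show ?thesis
    unfolding W1set_def using W by blast
qed

lemma Gamma_perE:
  assumes "\<gamma> \<in> Gamma_per Y U f y0"
  obtains T yT uT where "periodic_reachable Y U f y0 T yT uT"
    and "\<gamma> = period_occupation Y U f T yT uT"
proof -
  obtain T yT uT where P: "periodic_reachable Y U f y0 T yT uT" and "prob_on (graphG Y U f) \<gamma>"
    and "\<forall>Q\<in>sets \<gamma>. emeasure \<gamma> Q = ennreal ((1 / real T) * (\<Sum>t<T. indicator Q (yT t, uT t)))"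
    using assms unfolding Gamma_per_def by blast
  then have "\<gamma> = period_occupation Y U f T yT uT"
    unfolding period_occupation_def prob_on_def
    by (intro occupation_measure_eqI) (auto intro: periodic_reachable_in_graphG)
  with P show thesis by (rule that)
qed

theorem proposition2p4:
  fixes Y :: "'a::euclidean_space set"
    and U0 :: "'u::metric_space set"
    and U :: "'a \<Rightarrow> 'u set"
    and f :: "'a \<Rightarrow> 'u \<Rightarrow> 'a"
    and k :: "'a \<Rightarrow> 'u \<Rightarrow> real"
  assumes "Y \<noteq> {}" and "compact Y"
    and "compact U0"
    and "\<forall>y\<in>Y. U y \<subseteq> U0 \<and> compact (U y)"
    and "usc_on Y U"
    and "continuous_on (UNIV \<times> U0) (\<lambda>(y, u). f y u)"
    and "continuous_on (UNIV \<times> U0) (\<lambda>(y, u). k y u)"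
    and "\<forall>y\<in>Y. adm Y U f y \<noteq> {}"
  shows "\<forall>y0\<in>Y. Gamma_per Y U f y0 \<subseteq> W1set Y U f y0 \<and> kstar Y U f k y0 \<le> V_per Y U f k y0"
proof (intro ballI conjI)
  have U0: "\<forall>y\<in>Y. U y \<subseteq> U0"
    using assms(4) by blast
  have f_cont: "continuous_on (graphG Y U f) (\<lambda>p. f (fst p) (snd p))"
    by (rule continuous_on_graphG[OF U0 assms(6)])
  have k_meas: "(\<lambda>p. k (fst p) (snd p)) \<in> borel_measurable (restrict_space borel (graphG Y U f))"
    by (rule borel_measurable_continuous_on_restrict[OF continuous_on_graphG[OF U0 assms(7)]])
  fix y0
  show "Gamma_per Y U f y0 \<subseteq> W1set Y U f y0"
    by (auto elim!: Gamma_perE intro: period_occupation_in_W1set[OF f_cont])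
  show "kstar Y U f k y0 \<le> V_per Y U f k y0"
    unfolding kstar_def V_per_def
  proof (intro INF_greatest, clarify)
    fix T yT uT assume P: "periodic_reachable Y U f y0 T yT uT"
    have "(\<integral>p. k (fst p) (snd p) \<partial>period_occupation Y U f T yT uT)
        = (1 / real T) * (\<Sum>t<T. k (yT t) (uT t))"
      using periodic_reachable_in_graphG[OF P] by (simp add: integral_period_occupation[OF _ k_meas])
    then show "(INF \<gamma>\<in>W1set Y U f y0. ereal (\<integral>p. k (fst p) (snd p) \<partial>\<gamma>))
        \<le> ereal ((1 / real T) * (\<Sum>t<T. k (yT t) (uT t)))"
      using INF_lower[OF period_occupation_in_W1set[OF f_cont P],
          of "\<lambda>\<gamma>. ereal (\<integral>p. k (fst p) (snd p) \<partial>\<gamma>)"] by simp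
  qed
qed

end
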